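(* Let $G$ be a connected equimatchable graph. Then $G-v$ and $G\setminus e$ are equimatchable for all $v\in V(G)$ and all $e\in E(G)$ if and only if $G$ is either a complete graph on an odd number of vertices or a bipartite edge-stable equimatchable graph.
   Context: All graphs are finite and simple. A graph is equimatchable if all its maximal matchings have the same cardinality. $G\setminus e$ denotes the graph obtained by deleting the edge $e$ (keeping all vertices). An equimatchable graph $G$ is edge-stable if $G\setminus e$ is equimatchable for every $e\in E(G)$. *)

theory Defs
  imports Main
begin

definition graph :: "'a set \<Rightarrow> 'a set set \<Rightarrow> bool" where
  "graph V E \<longleftrightarrow> finite V \<and> (\<forall>e\<in>E. e \<subseteq> V \<and> card e = 2)"

definition matching :: "'a set set \<Rightarrow> 'a set set \<Rightarrow> bool" where
  "matching E M \<longleftrightarrow> M \<subseteq> E \<and> (\<forall>e\<in>M. \<forall>f\<in>M. e \<noteq> f \<longrightarrow> e \<inter> f = {})"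

definition maximal_matching :: "'a set set \<Rightarrow> 'a set set \<Rightarrow> bool" where
  "maximal_matching E M \<longleftrightarrow> matching E M \<and>
     (\<forall>M'. matching E M' \<and> M \<subseteq> M' \<longrightarrow> M' = M)"

definition equimatchable :: "'a set \<Rightarrow> 'a set set \<Rightarrow> bool" where
  "equimatchable V E \<longleftrightarrow>
     (\<forall>M M'. maximal_matching E M \<and> maximal_matching E M' \<longrightarrow> card M = card M')"

definition del_vertex_V :: "'a set \<Rightarrow> 'a \<Rightarrow> 'a set" where
  "del_vertex_V V v = V - {v}"

definition del_vertex_E :: "'a set set \<Rightarrow> 'a \<Rightarrow> 'a set set" where
  "del_vertex_E E v = {e \<in> E. v \<notin> e}"

definition del_edge :: "'a set set \<Rightarrow> 'a set \<Rightarrow> 'a set set" where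
  "del_edge E e = E - {e}"

definition edge_stable :: "'a set \<Rightarrow> 'a set set \<Rightarrow> bool" where
  "edge_stable V E \<longleftrightarrow> equimatchable V E \<and> (\<forall>e\<in>E. equimatchable V (del_edge E e))"

definition connected_graph :: "'a set \<Rightarrow> 'a set set \<Rightarrow> bool" where
  "connected_graph V E \<longleftrightarrow> V \<noteq> {} \<and>
     (\<forall>u\<in>V. \<forall>v\<in>V. (u, v) \<in> {(x, y). {x, y} \<in> E}\<^sup>*)"

definition complete_graph :: "'a set \<Rightarrow> 'a set set \<Rightarrow> bool" where
  "complete_graph V E \<longleftrightarrow> E = {{u, v} | u v. u \<in> V \<and> v \<in> V \<and> u \<noteq> v}"

definition bipartite :: "'a set \<Rightarrow> 'a set set \<Rightarrow> bool" where
  "bipartite V E \<longleftrightarrow> (\<exists>A B. A \<union> B = V \<and> A \<inter> B = {} \<and>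
     (\<forall>e\<in>E. \<exists>a\<in>A. \<exists>b\<in>B. e = {a, b}))"

end

theory Submission
  imports Defs
begin

text \<open>
  Fix a maximal matching \<open>M\<close> and let \<open>A\<close> be the set of vertices adjacent to an
  \<open>M\<close>-free vertex. Equimatchability rules out augmenting paths of length 3 and 5.
  Stability enters through one device: removing an \<open>M\<close>-edge, or exchanging two \<open>M\<close>-edges
  for a single edge, gives a matching \<open>N\<close> with \<open>|N| = |M| - 1\<close>; if every edge missed by
  \<open>N\<close> is \<open>e\<close> (or contains a free vertex \<open>v\<close>), then \<open>N\<close> and \<open>M\<close> are both maximal after deleting \<open>e\<close> (or \<open>v\<close>).

  If some \<open>M\<close>-edge has no end in \<open>A\<close>, this device isolates that edge, so the graph is
  \<open>K\<^sub>2\<close>. If some \<open>M\<close>-edge \<open>xy\<close> has both ends in \<open>A\<close>, they have a common free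
  neighbour \<open>u\<close>, and the triangle \<open>xyu\<close> propagates along the connected graph: every
  vertex is adjacent to \<open>u\<close> and covered by \<open>M\<close>, and shifting matching edges makes every
  vertex the apex of such a triangle, so the graph is complete on \<open>2|M| + 1\<close> vertices.
  Otherwise every \<open>M\<close>-edge, and then every edge, has exactly one end in \<open>A\<close>.

  Conversely, a maximal matching of an odd complete graph minus a vertex or an edge leaves at
  most two vertices uncovered, so parity fixes its size. In a bipartite edge-stable graph, a
  maximal matching \<open>N\<close> of \<open>G - v\<close> that is not maximal in \<open>G\<close> extends by an edge \<open>vy\<close>.
  If \<open>v\<close> is free in some maximal \<open>M\<close>, the bounds \<open>|N| \<le> |A \<inter> \<Union>N|\<close> and
  \<open>|A| \<le> |M|\<close> leave \<open>y\<close> as the only neighbour of \<open>v\<close> not covered by \<open>N\<close>, so \<open>N\<close>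
  and \<open>M\<close> are both maximal after deleting \<open>vy\<close>.
\<close>

section \<open>Matchings in a finite simple graph\<close>

definition vertex_stable :: "'a set \<Rightarrow> 'a set set \<Rightarrow> bool" where
  "vertex_stable V E \<longleftrightarrow> (\<forall>v\<in>V. equimatchable (del_vertex_V V v) (del_vertex_E E v))"

lemma matching_disjoint:
  "matching F M \<Longrightarrow> e \<in> M \<Longrightarrow> f \<in> M \<Longrightarrow> x \<in> e \<Longrightarrow> x \<in> f \<Longrightarrow> e = f"
  unfolding matching_def by blast

lemma matching_mono: "matching F M \<Longrightarrow> M \<subseteq> F' \<Longrightarrow> matching F' M"
  by (simp add: matching_def)

lemma maximal_matching_imp_matching: "maximal_matching F M \<Longrightarrow> matching F M"
  by (simp add: maximal_matching_def)

lemma Union_Diff_matching: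
  assumes "matching F M" "S \<subseteq> M"
  shows "\<Union>(M - S) = \<Union>M - \<Union>S"
  using matching_disjoint[OF assms(1)] assms(2) by blast

lemma matched_edges_disjoint:
  assumes "matching F M" "{a,b} \<in> M" "{p,q} \<in> M" "{a,b} \<noteq> {p,q}"
  shows "a \<noteq> p \<and> a \<noteq> q \<and> b \<noteq> p \<and> b \<noteq> q"
proof -
  have "{a,b} \<inter> {p,q} = {}" using assms unfolding matching_def by simp
  thus ?thesis by auto
qed

lemma complete_graph_edge:
  "complete_graph V E \<Longrightarrow> a \<in> V \<Longrightarrow> b \<in> V \<Longrightarrow> a \<noteq> b \<Longrightarrow> {a,b} \<in> E"
  unfolding complete_graph_def by blast

lemma bipartite_sides:
  assumes "bipartite V E"
  obtains P where "\<And>s t. {s,t} \<in> E \<Longrightarrow> s \<in> P \<longleftrightarrow> t \<notin> P"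
proof -
  obtain A B where AB: "A \<inter> B = {}" "\<forall>e\<in>E. \<exists>a\<in>A. \<exists>b\<in>B. e = {a,b}"
    using assms unfolding bipartite_def by blast
  have "s \<in> A \<longleftrightarrow> t \<notin> A" if "{s,t} \<in> E" for s t
  proof -
    have "\<exists>a\<in>A. \<exists>b\<in>B. {s,t} = {a,b}" using AB(2) that by (rule bspec)
    then obtain a b where ab: "a \<in> A" "b \<in> B" "{s,t} = {a,b}" by blast
    have "b \<notin> A" using ab(2) AB(1) by blast
    from ab(3) have "(s = a \<and> t = b) \<or> (s = b \<and> t = a)"
      by (auto simp: doubleton_eq_iff)
    thus ?thesis using ab(1) \<open>b \<notin> A\<close> by blast
  qed
  thus ?thesis by (rule that)
qed

lemma bipartite_no_triangle:
  assumes "bipartite V E" "{a,b} \<in> E" "{b,c} \<in> E" "{c,a} \<in> E"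
  shows False
proof -
  obtain P where P: "\<And>s t. {s,t} \<in> E \<Longrightarrow> s \<in> P \<longleftrightarrow> t \<notin> P"
    using bipartite_sides[OF assms(1)] by blast
  show False using P[OF assms(2)] P[OF assms(3)] P[OF assms(4)] by argo
qed

lemma bipartite_no_pentagon:
  assumes "bipartite V E" "{a,b} \<in> E" "{b,c} \<in> E" "{c,d} \<in> E" "{d,e} \<in> E" "{e,a} \<in> E"
  shows False
proof -
  obtain P where P: "\<And>s t. {s,t} \<in> E \<Longrightarrow> s \<in> P \<longleftrightarrow> t \<notin> P"
    using bipartite_sides[OF assms(1)] by blast
  show False using P[OF assms(2)] P[OF assms(3)] P[OF assms(4)] P[OF assms(5)] P[OF assms(6)]
    by argo
qed

lemma card_le_matching_if_transversal:
  assumes M: "matching F M" "finite M" and A: "A \<subseteq> \<Union>M"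
    and one: "\<And>e a b. e \<in> M \<Longrightarrow> a \<in> e \<inter> A \<Longrightarrow> b \<in> e \<inter> A \<Longrightarrow> a = b"
  shows "card A \<le> card M"
proof -
  define g where "g a = (SOME e. e \<in> M \<and> a \<in> e)" for a
  have g: "g a \<in> M \<and> a \<in> g a" if "a \<in> A" for a
    unfolding g_def by (rule someI_ex) (use A that in blast)
  have "inj_on g A"
  proof (rule inj_onI)
    fix a b assume a: "a \<in> A" and b: "b \<in> A" and eq: "g a = g b"
    show "a = b" using one[of "g a" a b] g[OF a] g[OF b] a b eq by simp
  qed
  moreover have "g ` A \<subseteq> M" using g by blast
  ultimately show ?thesis using card_inj_on_le M(2) by blast
qed

lemma card_matching_le_hitting_set:
  assumes N: "matching F N" and A: "finite A" and hit: "\<And>e. e \<in> N \<Longrightarrow> e \<inter> A \<noteq> {}"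
  shows "card N \<le> card (A \<inter> \<Union>N)"
proof -
  define h where "h e = (SOME a. a \<in> e \<inter> A)" for e
  have h: "h e \<in> e \<inter> A" if "e \<in> N" for e
    unfolding h_def by (rule someI_ex) (use hit that in blast)
  have "inj_on h N"
  proof (rule inj_onI)
    fix e1 e2 assume e1: "e1 \<in> N" and e2: "e2 \<in> N" and eq: "h e1 = h e2"
    show "e1 = e2" using matching_disjoint[OF N e1 e2, of "h e1"] h[OF e1] h[OF e2] eq by simp
  qed
  moreover have "h ` N \<subseteq> A \<inter> \<Union>N" using h by blast
  ultimately show ?thesis using card_inj_on_le A by blast
qed

locale simple_graph =
  fixes V :: "'a set" and E :: "'a set set"
  assumes graph: "graph V E"
begin

lemma finite_V: "finite V"
  using graph by (simp add: graph_def)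

lemma edge_subset_V: "e \<in> E \<Longrightarrow> e \<subseteq> V"
  using graph by (simp add: graph_def)

lemma card_edge: "e \<in> E \<Longrightarrow> card e = 2"
  using graph by (simp add: graph_def)

lemma finite_E: "finite E"
  by (rule finite_subset[of _ "Pow V"]) (use edge_subset_V finite_V in auto)

lemma edge_obtain:
  assumes "e \<in> E"
  obtains x y where "e = {x,y}" "x \<noteq> y"
  using card_edge[OF assms] that unfolding card_2_iff by blast

lemma edge_at:
  assumes "e \<in> E" "x \<in> e"
  obtains y where "e = {x,y}"
proof -
  obtain a b where ab: "e = {a,b}" using edge_obtain[OF assms(1)] by blast
  show ?thesis
  proof (cases "x = a")
    case True thus ?thesis using ab that by blast
  next
    case False
    hence "e = {x,a}" using ab assms(2) by (auto simp: insert_commute)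
    thus ?thesis by (rule that)
  qed
qed

lemma edge_distinct: "{x,y} \<in> E \<Longrightarrow> x \<noteq> y"
  using card_edge[of "{x,y}"] by (cases "x = y") auto

lemma edge_vertices: "{x,y} \<in> E \<Longrightarrow> x \<in> V \<and> y \<in> V"
  using edge_subset_V by blast

lemma edge_sym: "{x,y} \<in> E \<Longrightarrow> {y,x} \<in> E"
  by (simp add: insert_commute)

lemma finite_matching: "matching F M \<Longrightarrow> F \<subseteq> E \<Longrightarrow> finite M"
  using finite_E by (meson finite_subset matching_def)

lemma Union_matching_subset_V: "matching F M \<Longrightarrow> F \<subseteq> E \<Longrightarrow> \<Union>M \<subseteq> V"
  using edge_subset_V by (auto simp: matching_def)

lemma matched_edge:
  assumes "matching E M" "{a,b} \<in> M"
  shows "{a,b} \<in> E" "a \<noteq> b"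
  using assms edge_distinct by (auto simp: matching_def)

lemma matched_partner:
  assumes "matching F M" "F \<subseteq> E" "x \<in> \<Union>M"
  obtains y where "{x,y} \<in> M"
proof -
  obtain e where e: "e \<in> M" "x \<in> e" using assms(3) by blast
  have "e \<in> E" using e(1) assms(1,2) by (auto simp: matching_def)
  then obtain y where "e = {x,y}" using edge_at e(2) by blast
  thus ?thesis using that e(1) by blast
qed

lemma card_Union_matching:
  assumes "matching F M" "F \<subseteq> E"
  shows "card (\<Union>M) = 2 * card M"
proof -
  have edges: "A \<in> E" if "A \<in> M" for A
    using that assms by (auto simp: matching_def)
  have "card (\<Union>M) = sum card M"
  proof (rule card_Union_disjoint)
    show "pairwise disjnt M"
      using assms(1) unfolding matching_def pairwise_def disjnt_def by blast
    show "finite A" if "A \<in> M" for A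
      using finite_subset[OF edge_subset_V finite_V] edges[OF that] by blast
  qed
  also have "\<dots> = sum (\<lambda>_. 2) M"
    using card_edge edges by (intro sum.cong) auto
  finally show ?thesis by simp
qed

lemma card_V_eq_matching:
  assumes "matching F N" "F \<subseteq> E"
  shows "card V = 2 * card N + card (V - \<Union>N)"
proof -
  have "\<Union>N \<subseteq> V" using Union_matching_subset_V[OF assms] .
  hence "card V = card (\<Union>N) + card (V - \<Union>N)"
    using finite_V by (metis card_Diff_subset card_mono finite_subset le_add_diff_inverse)
  thus ?thesis using card_Union_matching[OF assms] by simp
qed

lemma maximal_matching_iff:
  assumes "F \<subseteq> E"
  shows "maximal_matching F M \<longleftrightarrow> matching F M \<and> (\<forall>e\<in>F. e \<inter> \<Union>M \<noteq> {})"
proof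
  assume max: "maximal_matching F M"
  hence m: "matching F M" by (rule maximal_matching_imp_matching)
  show "matching F M \<and> (\<forall>e\<in>F. e \<inter> \<Union>M \<noteq> {})"
  proof (intro conjI ballI m notI)
    fix e assume e: "e \<in> F" and miss: "e \<inter> \<Union>M = {}"
    have "e \<noteq> {}" using e assms card_edge[of e] by auto
    hence "e \<notin> M" using miss by blast
    moreover have "matching F (insert e M)"
      unfolding matching_def
    proof (intro conjI ballI impI)
      show "insert e M \<subseteq> F" using m e by (simp add: matching_def)
      fix f g assume "f \<in> insert e M" "g \<in> insert e M" "f \<noteq> g"
      thus "f \<inter> g = {}" using m miss unfolding matching_def by blast
    qed
    ultimately show False using max unfolding maximal_matching_def by blast
  qed
next
  assume h: "matching F M \<and> (\<forall>e\<in>F. e \<inter> \<Union>M \<noteq> {})"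
  show "maximal_matching F M" unfolding maximal_matching_def
  proof (intro conjI allI impI)
    show "matching F M" using h by simp
    fix M' assume M': "matching F M' \<and> M \<subseteq> M'"
    show "M' = M"
    proof (rule ccontr)
      assume "M' \<noteq> M"
      then obtain e where e: "e \<in> M'" "e \<notin> M" using M' by blast
      hence "e \<inter> \<Union>M \<noteq> {}" using h M' by (auto simp: matching_def)
      then obtain x f where x: "x \<in> e" "x \<in> f" "f \<in> M" by blast
      hence "e = f" using matching_disjoint[of F M' e f x] M' e(1) by blast
      thus False using e x by blast
    qed
  qed
qed

lemma maximal_matching_covers:
  "F \<subseteq> E \<Longrightarrow> maximal_matching F M \<Longrightarrow> e \<in> F \<Longrightarrow> e \<inter> \<Union>M \<noteq> {}"
  using maximal_matching_iff by blast

lemma maximal_matching_covers_edge: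
  assumes "maximal_matching E M" "{s,t} \<in> E"
  shows "s \<in> \<Union>M \<or> t \<in> \<Union>M"
proof -
  have "{s,t} \<inter> \<Union>M \<noteq> {}" using maximal_matching_covers[OF subset_refl assms] .
  thus ?thesis by blast
qed

lemma maximal_matching_subgraph:
  assumes "maximal_matching E M" "M \<subseteq> F" "F \<subseteq> E"
  shows "maximal_matching F M"
  unfolding maximal_matching_iff[OF assms(3)]
proof
  show "matching F M"
    using matching_mono[OF maximal_matching_imp_matching[OF assms(1)] assms(2)] .
  show "\<forall>e\<in>F. e \<inter> \<Union>M \<noteq> {}"
    using assms(3) maximal_matching_covers[OF subset_refl assms(1)] by blast
qed

lemma ex_maximal_matching_superset:
  assumes "F \<subseteq> E" "matching F N"
  obtains M where "maximal_matching F M" "N \<subseteq> M"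
proof -
  have "{M. matching F M} \<subseteq> Pow F" by (auto simp: matching_def)
  hence fin: "finite {M. matching F M}"
    using finite_subset[OF assms(1) finite_E] finite_subset by blast
  have "N \<in> {M. matching F M}" using assms(2) by simp
  then obtain M where M: "M \<in> {M. matching F M}" "N \<subseteq> M"
      "\<forall>M'\<in>{M. matching F M}. M \<subseteq> M' \<longrightarrow> M = M'"
    using finite_has_maximal2[OF fin] by blast
  have "maximal_matching F M" unfolding maximal_matching_def using M(1,3) by auto
  thus ?thesis using that M(2) by blast
qed

lemma ex_maximal_matching:
  assumes "F \<subseteq> E"
  obtains M where "maximal_matching F M"
proof -
  have "matching F {}" by (simp add: matching_def)
  thus ?thesis using ex_maximal_matching_superset[OF assms] that by blast
qed

lemma matching_exchange:
  assumes m: "matching E M" and S: "S \<subseteq> M" and T: "T \<subseteq> E"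
    and T_disj: "\<forall>t\<in>T. \<forall>t'\<in>T. t \<noteq> t' \<longrightarrow> t \<inter> t' = {}"
    and T_cov: "\<Union>T \<subseteq> \<Union>S \<union> - \<Union>M"
  shows "matching E (M - S \<union> T)"
    and "card (M - S \<union> T) + card S = card M + card T"
    and "\<Union>(M - S \<union> T) = (\<Union>M - \<Union>S) \<union> \<Union>T"
proof -
  have rest: "\<Union>(M - S) = \<Union>M - \<Union>S" using Union_Diff_matching[OF m S] .
  have sep: "e \<inter> t = {}" if "e \<in> M - S" "t \<in> T" for e t
  proof -
    have "e \<subseteq> \<Union>M - \<Union>S" using that(1) rest by blast
    moreover have "t \<subseteq> \<Union>S \<union> - \<Union>M" using that(2) T_cov by blast
    ultimately show ?thesis by blast
  qed
  show "matching E (M - S \<union> T)"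
    unfolding matching_def
  proof (intro conjI ballI impI)
    show "M - S \<union> T \<subseteq> E" using m T by (auto simp: matching_def)
    fix e f assume "e \<in> M - S \<union> T" "f \<in> M - S \<union> T" "e \<noteq> f"
    thus "e \<inter> f = {}" using m T_disj sep[of e f] sep[of f e] unfolding matching_def by blast
  qed
  have "(M - S) \<inter> T = {}"
  proof (rule ccontr)
    assume "(M - S) \<inter> T \<noteq> {}"
    then obtain t where t: "t \<in> M - S" "t \<in> T" by blast
    have "t \<noteq> {}" using t(2) T card_edge by fastforce
    thus False using sep[OF t] by blast
  qed
  moreover have fin: "finite M" using finite_matching[OF m subset_refl] .
  moreover have "finite T" using T finite_E finite_subset by blast
  moreover have "card S \<le> card M" using S fin by (simp add: card_mono)
  ultimately show "card (M - S \<union> T) + card S = card M + card T"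
    using S by (simp add: card_Un_disjoint card_Diff_subset finite_subset)
  show "\<Union>(M - S \<union> T) = (\<Union>M - \<Union>S) \<union> \<Union>T" using rest by blast
qed

lemma drop_matched_edge:
  assumes m: "matching E M" and ab: "{a,b} \<in> M"
  shows "matching E (M - {{a,b}})"
    and "card (M - {{a,b}}) + 1 = card M"
    and "\<Union>(M - {{a,b}}) = \<Union>M - {a,b}"
  using matching_exchange[OF m _ empty_subsetI, of "{{a,b}}"] ab by simp_all

lemma merge_matched_edges:
  assumes m: "matching E M" and ab: "{a,b} \<in> M" and pq: "{p,q} \<in> M" and ne: "{a,b} \<noteq> {p,q}"
    and ap: "{a,p} \<in> E"
  shows "matching E (M - {{a,b},{p,q}} \<union> {{a,p}})"
    and "card (M - {{a,b},{p,q}} \<union> {{a,p}}) + 1 = card M"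
    and "\<Union>(M - {{a,b},{p,q}} \<union> {{a,p}}) = \<Union>M - {b,q}"
proof -
  have a_ne_b: "a \<noteq> b" and p_ne_q: "p \<noteq> q" using matched_edge[OF m ab] matched_edge[OF m pq] by auto
  have dis: "a \<noteq> p" "a \<noteq> q" "b \<noteq> p" "b \<noteq> q" using matched_edges_disjoint[OF m ab pq ne] by auto
  note ex = matching_exchange[OF m, of "{{a,b},{p,q}}" "{{a,p}}"]
  have S: "{{a,b},{p,q}} \<subseteq> M" using ab pq by simp
  show "matching E (M - {{a,b},{p,q}} \<union> {{a,p}})" using ex(1) S ap by simp
  show "card (M - {{a,b},{p,q}} \<union> {{a,p}}) + 1 = card M" using ex(2) S ap ne by simp
  have "a \<in> \<Union>M" "p \<in> \<Union>M" using ab pq by blast+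
  moreover have "\<Union>(M - {{a,b},{p,q}} \<union> {{a,p}}) = (\<Union>M - {a,b,p,q}) \<union> {a,p}"
    using ex(3) S ap by auto
  ultimately show "\<Union>(M - {{a,b},{p,q}} \<union> {{a,p}}) = \<Union>M - {b,q}"
    using dis a_ne_b p_ne_q by auto
qed

lemma matching_card_le_maximal:
  assumes "F \<subseteq> E" "equimatchable W F" "maximal_matching F M" "matching F N"
  shows "card N \<le> card M"
proof -
  obtain N' where N': "maximal_matching F N'" "N \<subseteq> N'"
    using ex_maximal_matching_superset[OF assms(1,4)] by blast
  have "card N \<le> card N'"
    using N' assms(1) finite_matching[OF maximal_matching_imp_matching] card_mono by blast
  also have "\<dots> = card M" using assms(2,3) N'(1) unfolding equimatchable_def by blast
  finally show ?thesis .
qed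

lemma maximal_if_card_eq:
  assumes "F \<subseteq> E" "equimatchable W F" "maximal_matching F M" "matching F N" "card N = card M"
  shows "maximal_matching F N"
  unfolding maximal_matching_def
proof (intro conjI allI impI)
  show "matching F N" by fact
  fix N' assume N': "matching F N' \<and> N \<subseteq> N'"
  have "finite N'" using N' assms(1) finite_matching by blast
  moreover have "card N' \<le> card N" using matching_card_le_maximal[OF assms(1-3)] N' assms(5) by simp
  ultimately show "N' = N" using N' card_subset_eq by (metis card_mono order_antisym)
qed

lemma del_edge_card_eq:
  assumes eq: "equimatchable W (del_edge E e)"
    and M: "maximal_matching E M" "e \<notin> M"
    and N: "matching E N" "e \<notin> N" "\<And>f. f \<in> E \<Longrightarrow> f \<inter> \<Union>N = {} \<Longrightarrow> f = e"
  shows "card N = card M"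
proof -
  have sub: "del_edge E e \<subseteq> E" by (auto simp: del_edge_def)
  have "M \<subseteq> del_edge E e"
    using maximal_matching_imp_matching[OF M(1)] M(2) by (auto simp: del_edge_def matching_def)
  hence "maximal_matching (del_edge E e) M" using maximal_matching_subgraph[OF M(1) _ sub] by blast
  moreover have "maximal_matching (del_edge E e) N"
    unfolding maximal_matching_iff[OF sub]
    using N matching_mono[OF N(1)] by (auto simp: del_edge_def matching_def)
  ultimately show ?thesis using eq unfolding equimatchable_def by blast
qed

lemma del_vertex_card_eq:
  assumes eq: "equimatchable W (del_vertex_E E v)"
    and M: "maximal_matching E M" "v \<notin> \<Union>M"
    and N: "matching E N" "v \<notin> \<Union>N" "\<And>f. f \<in> E \<Longrightarrow> f \<inter> \<Union>N = {} \<Longrightarrow> v \<in> f"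
  shows "card N = card M"
proof -
  have sub: "del_vertex_E E v \<subseteq> E" by (auto simp: del_vertex_E_def)
  have "M \<subseteq> del_vertex_E E v"
    using maximal_matching_imp_matching[OF M(1)] M(2) by (auto simp: del_vertex_E_def matching_def)
  hence "maximal_matching (del_vertex_E E v) M" using maximal_matching_subgraph[OF M(1) _ sub] by blast
  moreover have "maximal_matching (del_vertex_E E v) N"
    unfolding maximal_matching_iff[OF sub]
    using N by (auto simp: del_vertex_E_def matching_def)
  ultimately show ?thesis using eq unfolding equimatchable_def by blast
qed

lemma maximal_matching_del_vertex:
  assumes "maximal_matching (del_vertex_E E v) N"
  shows "matching E N" and "v \<notin> \<Union>N" and "\<And>f. f \<in> E \<Longrightarrow> f \<inter> \<Union>N = {} \<Longrightarrow> v \<in> f"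
proof -
  have sub: "del_vertex_E E v \<subseteq> E" by (auto simp: del_vertex_E_def)
  have m: "matching (del_vertex_E E v) N" using maximal_matching_imp_matching[OF assms] .
  thus "matching E N" using sub matching_mono by (auto simp: matching_def)
  show "v \<notin> \<Union>N" using m by (auto simp: matching_def del_vertex_E_def)
  fix f assume "f \<in> E" "f \<inter> \<Union>N = {}"
  thus "v \<in> f" using maximal_matching_covers[OF sub assms, of f] by (auto simp: del_vertex_E_def)
qed

lemma maximal_matching_del_vertex_extend:
  assumes N: "maximal_matching (del_vertex_E E v) N" and not_max: "\<not> maximal_matching E N"
  obtains y where "{v,y} \<in> E" "y \<notin> \<Union>N" "maximal_matching E (insert {v,y} N)"
    "card (insert {v,y} N) = Suc (card N)"
proof -
  note D = maximal_matching_del_vertex[OF N]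
  obtain f where f: "f \<in> E" "f \<inter> \<Union>N = {}"
    using not_max D(1) maximal_matching_iff[OF subset_refl] by blast
  have vf: "v \<in> f" using D(3)[OF f] .
  then obtain y where y: "f = {v,y}" using edge_at[OF f(1)] by blast
  have m: "matching E (insert f N)"
    unfolding matching_def
  proof (intro conjI ballI impI)
    show "insert f N \<subseteq> E" using f(1) D(1) by (simp add: matching_def)
    fix a b assume "a \<in> insert f N" "b \<in> insert f N" "a \<noteq> b"
    thus "a \<inter> b = {}" using f(2) D(1) unfolding matching_def by blast
  qed
  have "\<forall>g\<in>E. g \<inter> \<Union>(insert f N) \<noteq> {}"
  proof
    fix g assume g: "g \<in> E"
    show "g \<inter> \<Union>(insert f N) \<noteq> {}"
    proof (cases "v \<in> g")
      case True thus ?thesis using vf by blast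
    next
      case False thus ?thesis using D(3)[OF g] by blast
    qed
  qed
  hence "maximal_matching E (insert f N)" using m maximal_matching_iff[OF subset_refl] by blast
  moreover have "f \<notin> N" using D(2) vf by blast
  hence "card (insert f N) = Suc (card N)" using finite_matching[OF D(1) subset_refl] by simp
  moreover have "y \<notin> \<Union>N" using f(2) y by blast
  ultimately show ?thesis using that f(1) y by blast
qed

definition free_nbrs :: "'a set set \<Rightarrow> 'a set" where
  "free_nbrs M = {a. \<exists>w. w \<notin> \<Union>M \<and> {a,w} \<in> E}"

lemma free_nbrsI: "w \<notin> \<Union>M \<Longrightarrow> {a,w} \<in> E \<Longrightarrow> a \<in> free_nbrs M"
  unfolding free_nbrs_def by blast

lemma free_nbrs_subset_V: "free_nbrs M \<subseteq> V"
  unfolding free_nbrs_def using edge_vertices by blast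

lemma free_nbrs_subset_matched:
  assumes "maximal_matching E M"
  shows "free_nbrs M \<subseteq> \<Union>M"
proof
  fix a assume "a \<in> free_nbrs M"
  then obtain w where "w \<notin> \<Union>M" "{a,w} \<in> E" unfolding free_nbrs_def by blast
  thus "a \<in> \<Union>M" using maximal_matching_covers_edge[OF assms] by blast
qed

lemma missed_edge_cases:
  assumes "maximal_matching E M" "{s,t} \<in> E" "\<Union>N = \<Union>M - R" "{s,t} \<inter> \<Union>N = {}"
  shows "s \<in> R \<and> t \<in> R \<or> s \<in> R \<and> t \<notin> \<Union>M \<or> s \<notin> \<Union>M \<and> t \<in> R"
  using maximal_matching_covers_edge[OF assms(1,2)] assms(3,4) by blast

lemma partners_adjacent_if_vertex_stable:
  assumes VS: "vertex_stable V E" and M: "maximal_matching E M" and st: "{s,t} \<in> E"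
    and s': "{s,s'} \<in> M" and t': "{t,t'} \<in> M" and ne: "{s,s'} \<noteq> {t,t'}"
    and w: "w \<notin> \<Union>M" "w \<in> V"
    and uniq: "\<And>z. z \<notin> \<Union>M \<Longrightarrow> {s',z} \<in> E \<or> {t',z} \<in> E \<Longrightarrow> z = w"
  shows "{s',t'} \<in> E"
proof (rule ccontr)
  assume no: "{s',t'} \<notin> E"
  have m: "matching E M" using maximal_matching_imp_matching[OF M] .
  define N where "N = M - {{s,s'},{t,t'}} \<union> {{s,t}}"
  note N = merge_matched_edges[OF m s' t' ne st, folded N_def]
  have missed: "w \<in> f" if f: "f \<in> E" "f \<inter> \<Union>N = {}" for f
  proof -
    obtain a b where ab: "f = {a,b}" "a \<noteq> b" using edge_obtain[OF f(1)] .
    have ab_edge: "{a,b} \<in> E" "{a,b} \<inter> \<Union>N = {}" using f ab(1) by simp_all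
    consider "a \<in> {s',t'}" "b \<in> {s',t'}" | "a \<in> {s',t'}" "b \<notin> \<Union>M" | "a \<notin> \<Union>M" "b \<in> {s',t'}"
      using missed_edge_cases[OF M ab_edge(1) N(3) ab_edge(2)] by blast
    thus ?thesis
    proof cases
      case 1
      hence "{a,b} = {s',t'}" using ab(2) by auto
      thus ?thesis using no ab_edge(1) by simp
    next
      case 2 thus ?thesis using uniq[of b] ab_edge(1) ab(1) by auto
    next
      case 3 thus ?thesis using uniq[of a] edge_sym[OF ab_edge(1)] ab(1) by auto
    qed
  qed
  have "w \<notin> \<Union>N" using N(3) w(1) by blast
  hence "card N = card M"
    using del_vertex_card_eq[OF _ M w(1) N(1) _ missed] VS w(2) unfolding vertex_stable_def by blast
  thus False using N(2) by simp
qed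

lemma equimatchable_if_few_uncovered:
  assumes sub: "F \<subseteq> E" and odd: "odd (card V)"
    and few: "\<And>N. maximal_matching F N \<Longrightarrow> card (V - \<Union>N) \<le> 2"
  shows "equimatchable W F"
proof -
  have size: "card V = Suc (2 * card N)" if N: "maximal_matching F N" for N
  proof -
    have "card V = 2 * card N + card (V - \<Union>N)"
      using card_V_eq_matching[OF maximal_matching_imp_matching[OF N] sub] .
    thus ?thesis using odd few[OF N] by presburger
  qed
  show ?thesis unfolding equimatchable_def
  proof (intro allI impI)
    fix M M' assume "maximal_matching F M \<and> maximal_matching F M'"
    hence "Suc (2 * card M) = Suc (2 * card M')" using size by metis
    thus "card M = card M'" by simp
  qed
qed

lemma odd_complete_del_vertex:
  assumes K: "complete_graph V E" and odd: "odd (card V)" and v: "v \<in> V"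
  shows "equimatchable W (del_vertex_E E v)"
proof (rule equimatchable_if_few_uncovered[OF _ odd])
  show sub: "del_vertex_E E v \<subseteq> E" by (auto simp: del_vertex_E_def)
  fix N assume N: "maximal_matching (del_vertex_E E v) N"
  let ?U = "V - \<Union>N - {v}"
  have "a1 = a2" if a: "a1 \<in> ?U" "a2 \<in> ?U" for a1 a2
  proof (rule ccontr)
    assume "a1 \<noteq> a2"
    hence "{a1,a2} \<in> del_vertex_E E v"
      using complete_graph_edge[OF K] a by (auto simp: del_vertex_E_def)
    hence "{a1,a2} \<inter> \<Union>N \<noteq> {}" using maximal_matching_covers[OF sub N] by blast
    thus False using a by blast
  qed
  hence "card ?U \<le> 1" using card_le_Suc0_iff_eq[of ?U] finite_V by auto
  moreover have "card (V - \<Union>N) \<le> card (insert v ?U)"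
    by (rule card_mono) (auto simp: finite_V)
  moreover have "card (insert v ?U) = Suc (card ?U)"
    by (rule card_insert_disjoint) (auto simp: finite_V)
  ultimately show "card (V - \<Union>N) \<le> 2" by simp
qed

lemma odd_complete_del_edge:
  assumes K: "complete_graph V E" and odd: "odd (card V)"
  shows "equimatchable W (del_edge E e)"
proof (rule equimatchable_if_few_uncovered[OF _ odd])
  show sub: "del_edge E e \<subseteq> E" by (auto simp: del_edge_def)
  fix N assume N: "maximal_matching (del_edge E e) N"
  let ?U = "V - \<Union>N"
  have pair: "{a1,a2} = e" if a: "a1 \<in> ?U" "a2 \<in> ?U" "a1 \<noteq> a2" for a1 a2
  proof (rule ccontr)
    assume "{a1,a2} \<noteq> e"
    hence "{a1,a2} \<in> del_edge E e" using complete_graph_edge[OF K] a by (auto simp: del_edge_def)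
    hence "{a1,a2} \<inter> \<Union>N \<noteq> {}" using maximal_matching_covers[OF sub N] by blast
    thus False using a by blast
  qed
  show "card ?U \<le> 2"
  proof (cases "\<exists>a1\<in>?U. \<exists>a2\<in>?U. a1 \<noteq> a2")
    case True
    then obtain a1 a2 where a: "a1 \<in> ?U" "a2 \<in> ?U" "a1 \<noteq> a2" by blast
    have "?U \<subseteq> {a1,a2}"
    proof
      fix z assume z: "z \<in> ?U"
      show "z \<in> {a1,a2}"
      proof (cases "z = a1")
        case False
        hence "{a1,z} = {a1,a2}" using pair[OF a(1) z] pair[OF a] by simp
        thus ?thesis by (auto simp: doubleton_eq_iff)
      qed simp
    qed
    hence "card ?U \<le> card {a1,a2}" by (rule card_mono[rotated]) simp
    also have "\<dots> \<le> 2" by (simp add: card_insert_if)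
    finally show ?thesis .
  next
    case False
    hence "card ?U \<le> 1" using card_le_Suc0_iff_eq[of ?U] finite_V by auto
    thus ?thesis by simp
  qed
qed

lemma complete_graph_if_adjacent:
  assumes "\<And>a v. a \<in> V \<Longrightarrow> v \<in> V \<Longrightarrow> v \<noteq> a \<Longrightarrow> {a,v} \<in> E"
  shows "complete_graph V E"
  unfolding complete_graph_def
proof
  show "E \<subseteq> {{a,v} | a v. a \<in> V \<and> v \<in> V \<and> a \<noteq> v}"
  proof
    fix e assume e: "e \<in> E"
    obtain s t where st: "e = {s,t}" "s \<noteq> t" using edge_obtain[OF e] .
    have "s \<in> V" "t \<in> V" using edge_vertices[of s t] e st(1) by simp_all
    thus "e \<in> {{a,v} | a v. a \<in> V \<and> v \<in> V \<and> a \<noteq> v}" using st by blast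
  qed
  show "{{a,v} | a v. a \<in> V \<and> v \<in> V \<and> a \<noteq> v} \<subseteq> E" using assms by blast
qed

lemma bipartite_if_two_vertices:
  assumes V: "V = {x,y}" and xy: "x \<noteq> y"
  shows "bipartite V E"
proof -
  have "e = {x,y}" if e: "e \<in> E" for e
  proof -
    obtain s t where st: "e = {s,t}" "s \<noteq> t" using edge_obtain[OF e] .
    have "s \<in> {x,y}" "t \<in> {x,y}" using edge_vertices[of s t] e st(1) V by simp_all
    thus ?thesis using st by auto
  qed
  thus ?thesis unfolding bipartite_def using V xy
    by (intro exI[of _ "{x}"] exI[of _ "{y}"]) blast
qed

end

section \<open>Connected equimatchable graphs\<close>

locale connected_equimatchable_graph = simple_graph +
  assumes equimatchable: "equimatchable V E"
    and connected: "connected_graph V E"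
begin

lemma maximal_matchings_card_eq:
  "maximal_matching E M \<Longrightarrow> maximal_matching E M' \<Longrightarrow> card M = card M'"
  using equimatchable unfolding equimatchable_def by blast

lemma matching_card_le:
  "maximal_matching E M \<Longrightarrow> matching E N \<Longrightarrow> card N \<le> card M"
  using matching_card_le_maximal[OF subset_refl equimatchable] .

lemma connected_closed:
  assumes "u \<in> S" "u \<in> V" "\<And>s t. s \<in> S \<Longrightarrow> {s,t} \<in> E \<Longrightarrow> t \<in> S"
  shows "V \<subseteq> S"
proof
  fix v assume "v \<in> V"
  hence "(u,v) \<in> {(x,y). {x,y} \<in> E}\<^sup>*" using connected assms(2) unfolding connected_graph_def by blast
  thus "v \<in> S"
  proof (induction rule: rtrancl_induct)
    case base show ?case using assms(1) .
  next
    case (step y z) thus ?case using assms(3) by blast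
  qed
qed

lemma shift_matched_edge:
  assumes M: "maximal_matching E M" and ab: "{a,b} \<in> M" and c: "c \<notin> \<Union>M" and ac: "{a,c} \<in> E"
  shows "maximal_matching E (M - {{a,b}} \<union> {{a,c}})"
    and "card (M - {{a,b}} \<union> {{a,c}}) = card M"
    and "\<Union>(M - {{a,b}} \<union> {{a,c}}) = insert c (\<Union>M - {b})"
proof -
  have m: "matching E M" using maximal_matching_imp_matching[OF M] .
  have "a \<noteq> b" using matched_edge[OF m ab] by simp
  have cov: "\<Union>{{a,c}} \<subseteq> \<Union>{{a,b}} \<union> - \<Union>M" using c by auto
  note ex = matching_exchange[OF m _ _ _ cov]
  show card: "card (M - {{a,b}} \<union> {{a,c}}) = card M" using ex(2) ab ac by simp
  show "maximal_matching E (M - {{a,b}} \<union> {{a,c}})"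
    using maximal_if_card_eq[OF subset_refl equimatchable M ex(1) card] ab ac by simp
  have "a \<in> \<Union>M" using ab by blast
  thus "\<Union>(M - {{a,b}} \<union> {{a,c}}) = insert c (\<Union>M - {b})"
    using ex(3) ab ac \<open>a \<noteq> b\<close> by auto
qed

lemma no_augmenting_path_3:
  assumes M: "maximal_matching E M" and ab: "{a,b} \<in> M" and s: "s \<notin> \<Union>M" and t: "t \<notin> \<Union>M"
    and st: "s \<noteq> t" and as: "{a,s} \<in> E" and bt: "{b,t} \<in> E"
  shows False
proof -
  have m: "matching E M" using maximal_matching_imp_matching[OF M] .
  have "a \<noteq> b" using matched_edge[OF m ab] by simp
  have "a \<in> \<Union>M" "b \<in> \<Union>M" using ab by blast+
  hence T: "\<forall>x\<in>{{a,s},{b,t}}. \<forall>y\<in>{{a,s},{b,t}}. x \<noteq> y \<longrightarrow> x \<inter> y = {}"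
    and "{a,s} \<noteq> {b,t}"
    using \<open>a \<noteq> b\<close> s t st by auto
  hence two: "card {{a,s},{b,t}} = 2" by simp
  have cov: "\<Union>{{a,s},{b,t}} \<subseteq> \<Union>{{a,b}} \<union> - \<Union>M" using s t by auto
  note ex = matching_exchange[OF m _ _ T cov]
  have "card (M - {{a,b}} \<union> {{a,s},{b,t}}) = card M + 1" using ex(2) ab as bt two by simp
  thus False using matching_card_le[OF M ex(1)] ab as bt by simp
qed

lemma no_augmenting_path_5:
  assumes M: "maximal_matching E M" and ab: "{a,b} \<in> M" and pq: "{p,q} \<in> M"
    and ne: "{a,b} \<noteq> {p,q}" and c: "c \<notin> \<Union>M" and w: "w \<notin> \<Union>M" and cw: "c \<noteq> w"
    and ap: "{a,p} \<in> E" and bc: "{b,c} \<in> E" and qw: "{q,w} \<in> E"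
  shows False
proof -
  have m: "matching E M" using maximal_matching_imp_matching[OF M] .
  have "a \<noteq> b" "p \<noteq> q" using matched_edge[OF m ab] matched_edge[OF m pq] by simp_all
  moreover have "a \<in> \<Union>M" "b \<in> \<Union>M" "p \<in> \<Union>M" "q \<in> \<Union>M" using ab pq by blast+
  moreover have "a \<noteq> p" "a \<noteq> q" "b \<noteq> p" "b \<noteq> q"
    using matched_edges_disjoint[OF m ab pq ne] by simp_all
  ultimately have T: "\<forall>x\<in>{{a,p},{b,c},{q,w}}. \<forall>y\<in>{{a,p},{b,c},{q,w}}. x \<noteq> y \<longrightarrow> x \<inter> y = {}"
    and "{a,p} \<noteq> {b,c}" "{a,p} \<noteq> {q,w}" "{b,c} \<noteq> {q,w}"
    using c w cw by auto
  hence three: "card {{a,p},{b,c},{q,w}} = 3" by simp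
  have two: "card {{a,b},{p,q}} = 2" using ne by simp
  have cov: "\<Union>{{a,p},{b,c},{q,w}} \<subseteq> \<Union>{{a,b},{p,q}} \<union> - \<Union>M" using c w by auto
  note ex = matching_exchange[OF m _ _ T cov]
  have "card (M - {{a,b},{p,q}} \<union> {{a,p},{b,c},{q,w}}) = card M + 1"
    using ex(2) ab pq ap bc qw two three by simp
  thus False using matching_card_le[OF M ex(1)] ab pq ap bc qw by simp
qed

lemma edge_outside_free_nbrs_partners:
  assumes M: "maximal_matching E M"
    and some_end: "\<And>x y. {x,y} \<in> M \<Longrightarrow> x \<in> free_nbrs M \<or> y \<in> free_nbrs M"
    and st: "{s,t} \<in> E" and s: "s \<notin> free_nbrs M" and t: "t \<notin> free_nbrs M"
  obtains s' t' w where "{s,s'} \<in> M" "{t,t'} \<in> M" "{s,s'} \<noteq> {t,t'}" "w \<notin> \<Union>M" "w \<in> V"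
    "\<And>z. z \<notin> \<Union>M \<Longrightarrow> {s',z} \<in> E \<or> {t',z} \<in> E \<Longrightarrow> z = w" "{s',w} \<in> E" "{t',w} \<in> E"
proof -
  have m: "matching E M" using maximal_matching_imp_matching[OF M] .
  have "s \<in> \<Union>M" using t free_nbrsI[of s M t] edge_sym[OF st] by blast
  then obtain s' where s': "{s,s'} \<in> M" using matched_partner[OF m subset_refl] by blast
  have "t \<in> \<Union>M" using s free_nbrsI[of t M s] st by blast
  then obtain t' where t': "{t,t'} \<in> M" using matched_partner[OF m subset_refl] by blast
  have s'A: "s' \<in> free_nbrs M" using some_end[OF s'] s by blast
  have t'A: "t' \<in> free_nbrs M" using some_end[OF t'] t by blast
  have ne: "{s,s'} \<noteq> {t,t'}"
  proof
    assume "{s,s'} = {t,t'}"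
    hence "t = s'" using edge_distinct[OF st] by (auto simp: doubleton_eq_iff)
    thus False using s'A t by simp
  qed
  obtain w where w: "w \<notin> \<Union>M" "{s',w} \<in> E" using s'A unfolding free_nbrs_def by blast
  obtain w' where w': "w' \<notin> \<Union>M" "{t',w'} \<in> E" using t'A unfolding free_nbrs_def by blast
  have only_w': "z = w'" if "z \<notin> \<Union>M" "{s',z} \<in> E" for z
  proof (rule ccontr)
    assume "z \<noteq> w'"
    thus False using no_augmenting_path_5[OF M s' t' ne that(1) w'(1) _ st that(2) w'(2)] by blast
  qed
  have only_w: "z = w" if "z \<notin> \<Union>M" "{t',z} \<in> E" for z
  proof (rule ccontr)
    assume "z \<noteq> w"
    thus False
      using no_augmenting_path_5[OF M t' s' ne[symmetric] that(1) w(1) _ edge_sym[OF st] that(2) w(2)]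
      by blast
  qed
  have "w = w'" using only_w'[OF w] .
  show ?thesis
  proof (rule that[OF s' t' ne w(1)])
    show "w \<in> V" using edge_vertices[OF w(2)] by blast
    show "z = w" if "z \<notin> \<Union>M" "{s',z} \<in> E \<or> {t',z} \<in> E" for z
      using that only_w only_w' \<open>w = w'\<close> by blast
    show "{s',w} \<in> E" by (rule w(2))
    show "{t',w} \<in> E" using w'(2) \<open>w = w'\<close> by simp
  qed
qed

lemma triangle_exchange_missed_edges:
  assumes M: "maximal_matching E M" and ab: "{a,b} \<in> M" and c: "c \<notin> \<Union>M"
    and ac: "{a,c} \<in> E" and bc: "{b,c} \<in> E" and qp: "{q,p} \<in> M" and ne: "{a,b} \<noteq> {q,p}"
    and aq: "{a,q} \<in> E"
    and f: "f \<in> E" "f \<inter> \<Union>(M - {{a,b},{q,p}} \<union> {{a,q}}) = {}"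
  shows "f = {b,c} \<or> f = {b,p} \<or> f = {p,c}"
proof -
  have m: "matching E M" using maximal_matching_imp_matching[OF M] .
  note N = merge_matched_edges[OF m ab qp ne aq]
  have only_c_at_b: "w = c" if "w \<notin> \<Union>M" "{b,w} \<in> E" for w
  proof (rule ccontr)
    assume "w \<noteq> c"
    thus False using no_augmenting_path_3[OF M ab c that(1) _ ac that(2)] by blast
  qed
  have only_c_at_p: "w = c" if "w \<notin> \<Union>M" "{p,w} \<in> E" for w
  proof (rule ccontr)
    assume "w \<noteq> c"
    thus False using no_augmenting_path_5[OF M ab qp ne c that(1) _ aq bc that(2)] by blast
  qed
  obtain x y where xy: "f = {x,y}" "x \<noteq> y" using edge_obtain[OF f(1)] .
  have xy_edge: "{x,y} \<in> E" "{x,y} \<inter> \<Union>(M - {{a,b},{q,p}} \<union> {{a,q}}) = {}"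
    using f xy(1) by simp_all
  consider "x \<in> {b,p}" "y \<in> {b,p}" | "x \<in> {b,p}" "y \<notin> \<Union>M" | "x \<notin> \<Union>M" "y \<in> {b,p}"
    using missed_edge_cases[OF M xy_edge(1) N(3) xy_edge(2)] by blast
  thus ?thesis
  proof cases
    case 1 thus ?thesis using xy by auto
  next
    case 2
    hence "y = c" using only_c_at_b only_c_at_p xy_edge(1) by blast
    thus ?thesis using 2 xy(1) by auto
  next
    case 3
    hence "x = c" using only_c_at_b only_c_at_p edge_sym[OF xy_edge(1)] by blast
    thus ?thesis using 3 xy(1) by (auto simp: insert_commute)
  qed
qed

lemma bipartite_matched_edge_free_nbrs:
  assumes B: "bipartite V E" and M: "maximal_matching E M" and xz: "{x,z} \<in> M"
  shows "x \<notin> free_nbrs M \<or> z \<notin> free_nbrs M"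
proof (rule ccontr)
  assume "\<not> ?thesis"
  then obtain w1 w2 where w1: "w1 \<notin> \<Union>M" "{x,w1} \<in> E" and w2: "w2 \<notin> \<Union>M" "{z,w2} \<in> E"
    unfolding free_nbrs_def by blast
  have "w1 = w2" using no_augmenting_path_3[OF M xz w1(1) w2(1) _ w1(2) w2(2)] by blast
  hence "{z,w1} \<in> E" using w2(2) by simp
  moreover have "{x,z} \<in> E" using matched_edge[OF maximal_matching_imp_matching[OF M] xz] by simp
  ultimately show False using bipartite_no_triangle[OF B _ _ edge_sym[OF w1(2)]] by blast
qed

end

section \<open>Edge-stable graphs\<close>

locale edge_stable_graph = connected_equimatchable_graph +
  assumes edge_stable: "\<forall>e\<in>E. equimatchable V (del_edge E e)"
begin

lemma only_edge_if_no_free_nbrs: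
  assumes M: "maximal_matching E M" and xy: "{x,y} \<in> M"
    and x: "x \<notin> free_nbrs M" and y: "y \<notin> free_nbrs M"
  shows "V = {x,y}"
proof -
  have m: "matching E M" using maximal_matching_imp_matching[OF M] .
  define N where "N = M - {{x,y}}"
  note N = drop_matched_edge[OF m xy, folded N_def]
  have xy_edge: "{x,y} \<in> E" using matched_edge[OF m xy] by simp
  have missed: "f = {x,y}" if f: "f \<in> E" "f \<inter> \<Union>N = {}" for f
  proof -
    obtain s t where st: "f = {s,t}" "s \<noteq> t" using edge_obtain[OF f(1)] .
    have st_edge: "{s,t} \<in> E" "{s,t} \<inter> \<Union>N = {}" using f st(1) by simp_all
    have "\<not> (s \<in> {x,y} \<and> t \<notin> \<Union>M)" using free_nbrsI[of t M s] st_edge(1) x y by blast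
    moreover have "\<not> (s \<notin> \<Union>M \<and> t \<in> {x,y})"
      using free_nbrsI[of s M t] edge_sym[OF st_edge(1)] x y by blast
    ultimately have "s \<in> {x,y} \<and> t \<in> {x,y}"
      using missed_edge_cases[OF M st_edge(1) N(3) st_edge(2)] by blast
    thus ?thesis using st by auto
  qed
  have isolated: "f = {x,y}" if f: "f \<in> E" and meets: "z \<in> f" "z \<in> {x,y}" for f z
  proof (rule ccontr)
    assume ne: "f \<noteq> {x,y}"
    have "matching E {f}" using f by (simp add: matching_def)
    then obtain M' where M': "maximal_matching E M'" "{f} \<subseteq> M'"
      using ex_maximal_matching_superset[OF subset_refl] by blast
    have "{x,y} \<notin> M'"
    proof
      assume "{x,y} \<in> M'"
      hence "f = {x,y}"
        using matching_disjoint[OF maximal_matching_imp_matching[OF M'(1)], of f "{x,y}" z] M'(2) meets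
        by blast
      thus False using ne by simp
    qed
    moreover have "{x,y} \<notin> N" unfolding N_def by simp
    moreover have "equimatchable V (del_edge E {x,y})" using edge_stable xy_edge by blast
    ultimately have "card N = card M'" using del_edge_card_eq[OF _ M'(1) _ N(1) _ missed] by blast
    moreover have "card M' = card M" using maximal_matchings_card_eq[OF M'(1) M] .
    ultimately show False using N(2) by simp
  qed
  have "V \<subseteq> {x,y}"
  proof (rule connected_closed)
    show "x \<in> {x,y}" by simp
    show "x \<in> V" using edge_vertices[OF xy_edge] by simp
    fix s t assume "s \<in> {x,y}" "{s,t} \<in> E"
    hence "{s,t} = {x,y}" using isolated[of "{s,t}" s] by simp
    thus "t \<in> {x,y}" by (metis insertI1 insert_commute)
  qed
  thus ?thesis using edge_vertices[OF xy_edge] by blast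
qed

lemma partners_not_adjacent:
  assumes M: "maximal_matching E M" and st: "{s,t} \<in> E"
    and s: "s \<notin> free_nbrs M" and t: "t \<notin> free_nbrs M"
    and s': "{s,s'} \<in> M" and t': "{t,t'} \<in> M" and ne: "{s,s'} \<noteq> {t,t'}"
  shows "{s',t'} \<notin> E"
proof
  assume s't': "{s',t'} \<in> E"
  have m: "matching E M" using maximal_matching_imp_matching[OF M] .
  have swapped: "{s',s} \<in> M" "{t',t} \<in> M" "{s',s} \<noteq> {t',t}"
    using s' t' ne by (simp_all add: insert_commute)
  define N where "N = M - {{s',s},{t',t}} \<union> {{s',t'}}"
  note N = merge_matched_edges[OF m swapped s't', folded N_def]
  have missed: "f = {s,t}" if f: "f \<in> E" "f \<inter> \<Union>N = {}" for f
  proof -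
    obtain a b where ab: "f = {a,b}" "a \<noteq> b" using edge_obtain[OF f(1)] .
    have ab_edge: "{a,b} \<in> E" "{a,b} \<inter> \<Union>N = {}" using f ab(1) by simp_all
    have "\<not> (a \<in> {s,t} \<and> b \<notin> \<Union>M)" using free_nbrsI[of b M a] ab_edge(1) s t by blast
    moreover have "\<not> (a \<notin> \<Union>M \<and> b \<in> {s,t})"
      using free_nbrsI[of a M b] edge_sym[OF ab_edge(1)] s t by blast
    ultimately have "a \<in> {s,t} \<and> b \<in> {s,t}"
      using missed_edge_cases[OF M ab_edge(1) N(3) ab_edge(2)] by blast
    thus ?thesis using ab by auto
  qed
  have "s' \<noteq> t" using matched_edges_disjoint[OF m s' t' ne] by simp
  have "{s,t} \<notin> M"
  proof
    assume "{s,t} \<in> M"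
    hence "{s,s'} = {s,t}" using matching_disjoint[OF m s', of "{s,t}" s] by simp
    thus False using \<open>s' \<noteq> t\<close> edge_distinct[OF st] by (auto simp: doubleton_eq_iff)
  qed
  moreover have "{s,t} \<notin> N" using N(3) by blast
  ultimately have "card N = card M"
    using del_edge_card_eq[OF _ M _ N(1) _ missed] edge_stable st by blast
  thus False using N(2) by simp
qed

text \<open>The disjunctive hypothesis lets this lemma serve both directions of the theorem.\<close>

lemma edge_meets_free_nbrs:
  assumes M: "maximal_matching E M"
    and some_end: "\<And>x y. {x,y} \<in> M \<Longrightarrow> x \<in> free_nbrs M \<or> y \<in> free_nbrs M"
    and vs_or_bip: "vertex_stable V E \<or> bipartite V E" and st: "{s,t} \<in> E"
  shows "s \<in> free_nbrs M \<or> t \<in> free_nbrs M"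
proof (rule ccontr)
  assume "\<not> ?thesis"
  hence s: "s \<notin> free_nbrs M" and t: "t \<notin> free_nbrs M" by simp_all
  obtain s' t' w where s': "{s,s'} \<in> M" and t': "{t,t'} \<in> M" and ne: "{s,s'} \<noteq> {t,t'}"
    and w: "w \<notin> \<Union>M" "w \<in> V" and uniq: "\<And>z. z \<notin> \<Union>M \<Longrightarrow> {s',z} \<in> E \<or> {t',z} \<in> E \<Longrightarrow> z = w"
    and s'w: "{s',w} \<in> E" and t'w: "{t',w} \<in> E"
    using edge_outside_free_nbrs_partners[OF M some_end st s t] by blast
  have no: "{s',t'} \<notin> E" using partners_not_adjacent[OF M st s t s' t' ne] .
  from vs_or_bip show False
  proof
    assume "vertex_stable V E"
    thus False using partners_adjacent_if_vertex_stable[OF _ M st s' t' ne w uniq] no by blast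
  next
    assume B: "bipartite V E"
    have m: "matching E M" using maximal_matching_imp_matching[OF M] .
    have "{t,t'} \<in> E" "{s,s'} \<in> E" using matched_edge[OF m t'] matched_edge[OF m s'] by simp_all
    thus False using bipartite_no_pentagon[OF B st _ t'w edge_sym[OF s'w] edge_sym] by blast
  qed
qed

lemma no_edge_within_free_nbrs:
  assumes M: "maximal_matching E M"
    and some_end: "\<And>x y. {x,y} \<in> M \<Longrightarrow> x \<in> free_nbrs M \<or> y \<in> free_nbrs M"
    and not_both_ends: "\<And>x y. {x,y} \<in> M \<Longrightarrow> x \<notin> free_nbrs M \<or> y \<notin> free_nbrs M"
    and vs_or_bip: "vertex_stable V E \<or> bipartite V E" and st: "{s,t} \<in> E"
  shows "s \<notin> free_nbrs M \<or> t \<notin> free_nbrs M"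
proof (rule ccontr)
  assume "\<not> ?thesis"
  hence s: "s \<in> free_nbrs M" and t: "t \<in> free_nbrs M" by simp_all
  have m: "matching E M" using maximal_matching_imp_matching[OF M] .
  obtain s' where s': "{s,s'} \<in> M"
    using matched_partner[OF m subset_refl] s free_nbrs_subset_matched[OF M] by blast
  obtain t' where t': "{t,t'} \<in> M"
    using matched_partner[OF m subset_refl] t free_nbrs_subset_matched[OF M] by blast
  have s'A: "s' \<notin> free_nbrs M" using not_both_ends[OF s'] s by blast
  have t'A: "t' \<notin> free_nbrs M" using not_both_ends[OF t'] t by blast
  have ne: "{s,s'} \<noteq> {t,t'}"
  proof
    assume "{s,s'} = {t,t'}"
    hence "t = s'" using edge_distinct[OF st] by (auto simp: doubleton_eq_iff)
    thus False using s'A t by simp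
  qed
  have no: "{s',t'} \<notin> E"
  proof
    assume "{s',t'} \<in> E"
    from edge_meets_free_nbrs[OF M some_end vs_or_bip this] s'A t'A show False by blast
  qed
  define N where "N = M - {{s,s'},{t,t'}} \<union> {{s,t}}"
  note N = merge_matched_edges[OF m s' t' ne st, folded N_def]
  have "\<forall>f\<in>E. f \<inter> \<Union>N \<noteq> {}"
  proof (intro ballI notI)
    fix f assume f: "f \<in> E" "f \<inter> \<Union>N = {}"
    obtain a b where ab: "f = {a,b}" "a \<noteq> b" using edge_obtain[OF f(1)] .
    have ab_edge: "{a,b} \<in> E" "{a,b} \<inter> \<Union>N = {}" using f ab(1) by simp_all
    have "\<not> (a \<in> {s',t'} \<and> b \<notin> \<Union>M)" using free_nbrsI[of b M a] ab_edge(1) s'A t'A by blast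
    moreover have "\<not> (a \<notin> \<Union>M \<and> b \<in> {s',t'})"
      using free_nbrsI[of a M b] edge_sym[OF ab_edge(1)] s'A t'A by blast
    ultimately have "a \<in> {s',t'} \<and> b \<in> {s',t'}"
      using missed_edge_cases[OF M ab_edge(1) N(3) ab_edge(2)] by blast
    hence "{a,b} = {s',t'}" using ab(2) by auto
    thus False using no ab_edge(1) by simp
  qed
  hence "maximal_matching E N" using N(1) maximal_matching_iff[OF subset_refl] by blast
  thus False using maximal_matchings_card_eq[OF M] N(2) by fastforce
qed

lemma bipartite_by_free_nbrs:
  assumes M: "maximal_matching E M"
    and some_end: "\<And>x y. {x,y} \<in> M \<Longrightarrow> x \<in> free_nbrs M \<or> y \<in> free_nbrs M"
    and not_both_ends: "\<And>x y. {x,y} \<in> M \<Longrightarrow> x \<notin> free_nbrs M \<or> y \<notin> free_nbrs M"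
    and vs_or_bip: "vertex_stable V E \<or> bipartite V E"
  shows "bipartite V E"
proof -
  have "\<exists>a\<in>free_nbrs M. \<exists>b\<in>V - free_nbrs M. e = {a,b}" if e: "e \<in> E" for e
  proof -
    obtain s t where st: "e = {s,t}" using edge_obtain[OF e] by blast
    have st_edge: "{s,t} \<in> E" using e st by simp
    have V: "s \<in> V" "t \<in> V" using edge_vertices[OF st_edge] by simp_all
    show "\<exists>a\<in>free_nbrs M. \<exists>b\<in>V - free_nbrs M. e = {a,b}"
    proof (cases "s \<in> free_nbrs M")
      case True
      hence "t \<notin> free_nbrs M"
        using no_edge_within_free_nbrs[OF M some_end not_both_ends vs_or_bip st_edge] by blast
      thus ?thesis using True V st by blast
    next
      case False
      hence "t \<in> free_nbrs M"
        using edge_meets_free_nbrs[OF M some_end vs_or_bip st_edge] by blast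
      moreover have "e = {t,s}" using st by (simp add: insert_commute)
      ultimately show ?thesis using False V by blast
    qed
  qed
  thus ?thesis unfolding bipartite_def using free_nbrs_subset_V
    by (intro exI[of _ "free_nbrs M"] exI[of _ "V - free_nbrs M"]) blast
qed

lemma bipartite_free_nbrs_card_bounds:
  assumes B: "bipartite V E" and M: "maximal_matching E M" and v: "v \<in> V" "v \<notin> \<Union>M"
    and N: "matching E N"
  shows "card (free_nbrs M) \<le> card M" and "card N \<le> card (free_nbrs M \<inter> \<Union>N)"
proof -
  let ?A = "free_nbrs M"
  have m: "matching E M" using maximal_matching_imp_matching[OF M] .
  have some_end: "x \<in> ?A \<or> z \<in> ?A" if xz: "{x,z} \<in> M" for x z
  proof (rule ccontr)
    assume "\<not> (x \<in> ?A \<or> z \<in> ?A)"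
    hence "V = {x,z}" using only_edge_if_no_free_nbrs[OF M xz] by blast
    thus False using v xz by blast
  qed
  have "a = b" if e: "e \<in> M" and a: "a \<in> e \<inter> ?A" and b: "b \<in> e \<inter> ?A" for e a b
  proof (rule ccontr)
    assume "a \<noteq> b"
    have "e \<in> E" using e m by (auto simp: matching_def)
    then obtain c where "e = {a,c}" using edge_at a by blast
    hence "{a,b} \<in> M" using e b \<open>a \<noteq> b\<close> by auto
    thus False using bipartite_matched_edge_free_nbrs[OF B M] a b by blast
  qed
  thus "card ?A \<le> card M"
    using card_le_matching_if_transversal[OF m finite_matching[OF m subset_refl]
        free_nbrs_subset_matched[OF M]] by blast
  have "e \<inter> ?A \<noteq> {}" if "e \<in> N" for e
  proof -
    have "e \<in> E" using that N by (auto simp: matching_def)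
    then obtain a b where ab: "e = {a,b}" using edge_obtain by blast
    have "{a,b} \<in> E" using \<open>e \<in> E\<close> ab by simp
    hence "a \<in> ?A \<or> b \<in> ?A" using edge_meets_free_nbrs[OF M some_end] B by blast
    thus ?thesis using ab by blast
  qed
  moreover have "finite ?A" using free_nbrs_subset_V finite_V finite_subset by blast
  ultimately show "card N \<le> card (?A \<inter> \<Union>N)"
    using card_matching_le_hitting_set[OF N] by blast
qed

lemma bipartite_del_free_vertex_card_eq:
  assumes B: "bipartite V E" and M: "maximal_matching E M" and v: "v \<in> V" "v \<notin> \<Union>M"
    and N: "maximal_matching (del_vertex_E E v) N"
  shows "card N = card M"
proof (rule ccontr)
  assume neq: "card N \<noteq> card M"
  note D = maximal_matching_del_vertex[OF N]
  note bounds = bipartite_free_nbrs_card_bounds[OF B M v D(1)]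
  have "\<not> maximal_matching E N" using neq maximal_matchings_card_eq[OF _ M] by blast
  then obtain y where y: "{v,y} \<in> E" "y \<notin> \<Union>N" "maximal_matching E (insert {v,y} N)"
      "card (insert {v,y} N) = Suc (card N)"
    using maximal_matching_del_vertex_extend[OF N] by blast
  have size: "card N + 1 = card M" using maximal_matchings_card_eq[OF y(3) M] y(4) by simp
  let ?A = "free_nbrs M"
  have finite_A: "finite ?A" using free_nbrs_subset_V finite_V finite_subset by blast
  have yA: "y \<in> ?A" using free_nbrsI[OF v(2) edge_sym[OF y(1)]] .
  show False
  proof (cases "\<exists>y'. y' \<noteq> y \<and> {v,y'} \<in> E \<and> y' \<notin> \<Union>N")
    case True
    then obtain y' where y': "y' \<noteq> y" "{v,y'} \<in> E" "y' \<notin> \<Union>N" by blast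
    have y'A: "y' \<in> ?A" using free_nbrsI[OF v(2) edge_sym[OF y'(2)]] .
    have "card (?A \<inter> \<Union>N) \<le> card (?A - {y,y'})"
      using y(2) y'(3) finite_A by (intro card_mono) auto
    also have "\<dots> = card ?A - 2" using yA y'A y'(1) finite_A by (simp add: card_Diff_subset)
    finally have "card N \<le> card ?A - 2" using bounds(2) by simp
    moreover have "card {y,y'} \<le> card ?A" using yA y'A finite_A by (intro card_mono) auto
    ultimately show False using bounds(1) size y'(1) by simp
  next
    case False
    have missed: "f = {v,y}" if f: "f \<in> E" "f \<inter> \<Union>N = {}" for f
    proof -
      obtain z where z: "f = {v,z}" using edge_at[OF f(1) D(3)[OF f]] by blast
      have "{v,z} \<in> E" "z \<notin> \<Union>N" using f z by auto
      hence "z = y" using False by blast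
      thus ?thesis using z by simp
    qed
    have "{v,y} \<notin> M" using v(2) by blast
    moreover have "{v,y} \<notin> N" using D(2) by blast
    moreover have "equimatchable V (del_edge E {v,y})" using edge_stable y(1) by blast
    ultimately have "card N = card M" using del_edge_card_eq[OF _ M _ D(1) _ missed] by blast
    thus False using neq by simp
  qed
qed

lemma bipartite_del_vertex_equimatchable:
  assumes B: "bipartite V E" and v: "v \<in> V"
  shows "equimatchable W (del_vertex_E E v)"
  unfolding equimatchable_def
proof (intro allI impI)
  fix N1 N2
  assume N: "maximal_matching (del_vertex_E E v) N1 \<and> maximal_matching (del_vertex_E E v) N2"
  show "card N1 = card N2"
  proof (cases "\<exists>M. maximal_matching E M \<and> v \<notin> \<Union>M")
    case True
    then obtain M where M: "maximal_matching E M" "v \<notin> \<Union>M" by blast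
    have "card N1 = card M" "card N2 = card M"
      using N bipartite_del_free_vertex_card_eq[OF B M(1) v M(2)] by simp_all
    thus ?thesis by simp
  next
    case False
    obtain M0 where M0: "maximal_matching E M0" using ex_maximal_matching[OF subset_refl] by blast
    have "Suc (card N) = card M0" if N: "maximal_matching (del_vertex_E E v) N" for N
    proof -
      have "\<not> maximal_matching E N" using False maximal_matching_del_vertex(2)[OF N] by blast
      then obtain y where "maximal_matching E (insert {v,y} N)" "card (insert {v,y} N) = Suc (card N)"
        using maximal_matching_del_vertex_extend[OF N] by blast
      thus ?thesis using maximal_matchings_card_eq[OF _ M0] by simp
    qed
    hence "Suc (card N1) = Suc (card N2)" using N by simp
    thus ?thesis by simp
  qed
qed

end

section \<open>Vertex- and edge-stable graphs\<close>

locale vertex_edge_stable_graph = edge_stable_graph +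
  assumes vertex_stable: "vertex_stable V E"
begin

lemma triangle_crossing_edge:
  assumes M: "maximal_matching E M" and ab: "{a,b} \<in> M" and c: "c \<in> V" "c \<notin> \<Union>M"
    and ac: "{a,c} \<in> E" and bc: "{b,c} \<in> E" and pq: "{p,q} \<in> M" and ne: "{a,b} \<noteq> {p,q}"
    and aq: "{a,q} \<in> E"
  shows "{p,b} \<in> E \<and> {p,c} \<in> E"
proof -
  have m: "matching E M" using maximal_matching_imp_matching[OF M] .
  have qp: "{q,p} \<in> M" and ne': "{a,b} \<noteq> {q,p}" using pq ne by (simp_all add: insert_commute)
  define N where "N = M - {{a,b},{q,p}} \<union> {{a,q}}"
  note N = merge_matched_edges[OF m ab qp ne' aq, folded N_def]
  note missed = triangle_exchange_missed_edges[OF M ab c(2) ac bc qp ne' aq, folded N_def]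
  have c_N: "c \<notin> \<Union>N" and b_N: "b \<notin> \<Union>N" using N(3) c(2) by auto
  have smaller: "card N \<noteq> card M" using N(2) by simp
  txt \<open>Without \<open>bp\<close> and \<open>pc\<close>, \<open>N\<close> is maximal in \<open>G \<setminus> bc\<close>; without \<open>pc\<close> only,
    in \<open>G - b\<close> (against \<open>M\<close> with \<open>ab\<close> shifted to \<open>ac\<close>); without \<open>bp\<close> only, in \<open>G - c\<close>.\<close>
  show ?thesis
  proof (rule ccontr)
    assume "\<not> ?thesis"
    hence "{b,p} \<notin> E \<or> {p,c} \<notin> E" by (simp add: insert_commute)
    then consider (neither) "{b,p} \<notin> E" "{p,c} \<notin> E" | (only_b) "{b,p} \<in> E" "{p,c} \<notin> E"
      | (only_c) "{b,p} \<notin> E" "{p,c} \<in> E"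
      by blast
    thus False
    proof cases
      case neither
      have only_bc: "f = {b,c}" if "f \<in> E" "f \<inter> \<Union>N = {}" for f
        using missed[OF that] that(1) neither by auto
      have "{b,c} \<notin> M" "{b,c} \<notin> N" using c(2) c_N by blast+
      moreover have "equimatchable V (del_edge E {b,c})" using edge_stable bc by blast
      ultimately have "card N = card M" using del_edge_card_eq[OF _ M _ N(1) _ only_bc] by blast
      thus False using smaller by simp
    next
      case only_b
      have at_b: "b \<in> f" if "f \<in> E" "f \<inter> \<Union>N = {}" for f
        using missed[OF that] that(1) only_b by auto
      define M1 where "M1 = M - {{a,b}} \<union> {{a,c}}"
      note M1 = shift_matched_edge[OF M ab c(2) ac, folded M1_def]
      have "b \<in> \<Union>M" using ab by blast
      hence "b \<notin> \<Union>M1" using M1(3) c(2) by auto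
      moreover have "equimatchable (del_vertex_V V b) (del_vertex_E E b)"
        using vertex_stable edge_vertices[OF bc] unfolding vertex_stable_def by blast
      ultimately have "card N = card M1" using del_vertex_card_eq[OF _ M1(1) _ N(1) b_N at_b] by blast
      thus False using smaller M1(2) by simp
    next
      case only_c
      have at_c: "c \<in> f" if "f \<in> E" "f \<inter> \<Union>N = {}" for f
        using missed[OF that] that(1) only_c by auto
      have "equimatchable (del_vertex_V V c) (del_vertex_E E c)"
        using vertex_stable c(1) unfolding vertex_stable_def by blast
      hence "card N = card M" using del_vertex_card_eq[OF _ M c(2) N(1) c_N at_c] by blast
      thus False using smaller by simp
    qed
  qed
qed

lemma triangle_crossing_edges:
  assumes M: "maximal_matching E M" and ab: "{a,b} \<in> M" and c: "c \<in> V" "c \<notin> \<Union>M"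
    and ac: "{a,c} \<in> E" and bc: "{b,c} \<in> E" and pq: "{p,q} \<in> M" and ne: "{a,b} \<noteq> {p,q}"
    and crossing: "{p,a} \<in> E \<or> {p,b} \<in> E \<or> {p,c} \<in> E \<or> {q,a} \<in> E \<or> {q,b} \<in> E \<or> {q,c} \<in> E"
  shows "{p,a} \<in> E \<and> {p,b} \<in> E \<and> {p,c} \<in> E \<and> {q,a} \<in> E \<and> {q,b} \<in> E \<and> {q,c} \<in> E"
proof -
  have m: "matching E M" using maximal_matching_imp_matching[OF M] .
  have ab_edge: "{a,b} \<in> E" using matched_edge[OF m ab] by simp
  have ba: "{b,a} \<in> M" and qp: "{q,p} \<in> M" using ab pq by (simp_all add: insert_commute)
  have ne2: "{b,a} \<noteq> {p,q}" "{a,b} \<noteq> {q,p}" "{b,a} \<noteq> {q,p}"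
    using ne by (simp_all add: insert_commute)
  have R1: "{a,q} \<in> E \<Longrightarrow> {p,b} \<in> E \<and> {p,c} \<in> E"
    using triangle_crossing_edge[OF M ab c ac bc pq ne] .
  have R2: "{b,q} \<in> E \<Longrightarrow> {p,a} \<in> E \<and> {p,c} \<in> E"
    using triangle_crossing_edge[OF M ba c bc ac pq ne2(1)] .
  have R3: "{a,p} \<in> E \<Longrightarrow> {q,b} \<in> E \<and> {q,c} \<in> E"
    using triangle_crossing_edge[OF M ab c ac bc qp ne2(2)] .
  have R4: "{b,p} \<in> E \<Longrightarrow> {q,a} \<in> E \<and> {q,c} \<in> E"
    using triangle_crossing_edge[OF M ba c bc ac qp ne2(3)] .
  txt \<open>The same argument with the roles of \<open>b\<close> and \<open>c\<close> exchanged, after moving \<open>a\<close> onto \<open>c\<close>.\<close>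
  define M1 where "M1 = M - {{a,b}} \<union> {{a,c}}"
  note S = shift_matched_edge[OF M ab c(2) ac, folded M1_def]
  have ca: "{c,a} \<in> M1" unfolding M1_def by (simp add: insert_commute)
  have b_free: "b \<notin> \<Union>M1" using S(3) c(2) ab by auto
  have b_V: "b \<in> V" using edge_vertices[OF bc] by simp
  have pq1: "{p,q} \<in> M1" "{q,p} \<in> M1" using pq qp ne ne2(2) unfolding M1_def by auto
  have ne1: "{c,a} \<noteq> {p,q}" "{c,a} \<noteq> {q,p}" using c(2) pq by auto
  have R5: "{c,q} \<in> E \<Longrightarrow> {p,a} \<in> E \<and> {p,b} \<in> E"
    using triangle_crossing_edge[OF S(1) ca b_V b_free edge_sym[OF bc] ab_edge pq1(1) ne1(1)] .
  have R6: "{c,p} \<in> E \<Longrightarrow> {q,a} \<in> E \<and> {q,b} \<in> E"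
    using triangle_crossing_edge[OF S(1) ca b_V b_free edge_sym[OF bc] ab_edge pq1(2) ne1(2)] .
  have sym: "{p,a} \<in> E \<longleftrightarrow> {a,p} \<in> E" "{p,b} \<in> E \<longleftrightarrow> {b,p} \<in> E" "{p,c} \<in> E \<longleftrightarrow> {c,p} \<in> E"
    "{q,a} \<in> E \<longleftrightarrow> {a,q} \<in> E" "{q,b} \<in> E \<longleftrightarrow> {b,q} \<in> E" "{q,c} \<in> E \<longleftrightarrow> {c,q} \<in> E"
    by (simp_all add: insert_commute)
  show ?thesis using crossing R1 R2 R3 R4 R5 R6 unfolding sym by blast
qed

lemma triangle_apex_closed:
  assumes M: "maximal_matching E M" and xy: "{x,y} \<in> M" and u: "u \<in> V" "u \<notin> \<Union>M"
    and xu: "{x,u} \<in> E" and yu: "{y,u} \<in> E"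
    and s: "s = u \<or> (\<exists>s'. {s,s'} \<in> M \<and> {s,u} \<in> E \<and> {s',u} \<in> E)" and st: "{s,t} \<in> E"
  shows "t = u \<or> (\<exists>t'. {t,t'} \<in> M \<and> {t,u} \<in> E \<and> {t',u} \<in> E)"
proof (cases "t \<in> \<Union>M")
  case False
  hence "s \<in> \<Union>M" using maximal_matching_covers_edge[OF M st] by blast
  hence "s \<noteq> u" using u(2) by blast
  then obtain s' where s': "{s,s'} \<in> M" "{s',u} \<in> E" using s by blast
  have "t = u"
  proof (rule ccontr)
    assume "t \<noteq> u"
    thus False using no_augmenting_path_3[OF M s'(1) False u(2) _ st s'(2)] by blast
  qed
  thus ?thesis by simp
next
  case True
  have m: "matching E M" using maximal_matching_imp_matching[OF M] .
  obtain t' where t': "{t,t'} \<in> M" using matched_partner[OF m subset_refl True] by blast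
  obtain a b where ab: "{a,b} \<in> M" "{a,u} \<in> E" "{b,u} \<in> E" and near: "{t,a} \<in> E \<or> {t,u} \<in> E"
  proof (cases "s = u")
    case True thus ?thesis using that[OF xy xu yu] edge_sym[OF st] by blast
  next
    case False
    then obtain s' where "{s,s'} \<in> M" "{s,u} \<in> E" "{s',u} \<in> E" using s by blast
    thus ?thesis using that edge_sym[OF st] by blast
  qed
  have "{t,u} \<in> E \<and> {t',u} \<in> E"
  proof (cases "{a,b} = {t,t'}")
    case True thus ?thesis using ab by (auto simp: doubleton_eq_iff)
  next
    case False
    thus ?thesis using triangle_crossing_edges[OF M ab(1) u ab(2,3) t' False] near by blast
  qed
  thus ?thesis using t' by blast
qed

lemma triangle_apex_universal:
  assumes M: "maximal_matching E M" and xy: "{x,y} \<in> M" and u: "u \<in> V" "u \<notin> \<Union>M"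
    and xu: "{x,u} \<in> E" and yu: "{y,u} \<in> E"
  shows "\<forall>v\<in>V. v \<noteq> u \<longrightarrow> {u,v} \<in> E" and "V = insert u (\<Union>M)"
proof -
  define S where "S = {t. t = u \<or> (\<exists>t'. {t,t'} \<in> M \<and> {t,u} \<in> E \<and> {t',u} \<in> E)}"
  have "V \<subseteq> S"
    by (rule connected_closed[OF _ u(1)])
      (use triangle_apex_closed[OF M xy u xu yu] in \<open>auto simp: S_def\<close>)
  show "\<forall>v\<in>V. v \<noteq> u \<longrightarrow> {u,v} \<in> E"
  proof (intro ballI impI)
    fix v assume "v \<in> V" "v \<noteq> u"
    hence "{v,u} \<in> E" using \<open>V \<subseteq> S\<close> unfolding S_def by blast
    thus "{u,v} \<in> E" by (rule edge_sym)
  qed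
  have "V \<subseteq> insert u (\<Union>M)" using \<open>V \<subseteq> S\<close> unfolding S_def by blast
  thus "V = insert u (\<Union>M)"
    using Union_matching_subset_V[OF maximal_matching_imp_matching[OF M] subset_refl] u(1) by blast
qed

lemma complete_odd_if_free_nbrs:
  assumes M: "maximal_matching E M" and xy: "{x,y} \<in> M"
    and x: "x \<in> free_nbrs M" and y: "y \<in> free_nbrs M"
  shows "complete_graph V E \<and> odd (card V)"
proof -
  have m: "matching E M" using maximal_matching_imp_matching[OF M] .
  obtain u w where u: "u \<notin> \<Union>M" "{x,u} \<in> E" and w: "w \<notin> \<Union>M" "{y,w} \<in> E"
    using x y unfolding free_nbrs_def by blast
  have "u = w" using no_augmenting_path_3[OF M xy u(1) w(1) _ u(2) w(2)] by blast
  hence yu: "{y,u} \<in> E" using w(2) by simp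
  have uV: "u \<in> V" using edge_vertices[OF u(2)] by blast
  note apex = triangle_apex_universal[OF M xy uV u(1) u(2) yu]
  have adjacent: "{a,v} \<in> E" if a: "a \<in> V" "v \<in> V" "v \<noteq> a" for a v
  proof (cases "a = u")
    case True thus ?thesis using apex(1) a by blast
  next
    case False
    txt \<open>Move the partner of \<open>a\<close> onto \<open>u\<close>; then \<open>a\<close> is the free apex of a triangle.\<close>
    hence "a \<in> \<Union>M" using apex(2) a(1) by blast
    then obtain b where "{a,b} \<in> M" using matched_partner[OF m subset_refl] by blast
    hence ba: "{b,a} \<in> M" by (simp add: insert_commute)
    have ba_edge: "{b,a} \<in> E" using matched_edge[OF m ba] by simp
    have "b \<noteq> u" using ba u(1) by blast
    hence "{u,b} \<in> E" using apex(1) edge_vertices[OF ba_edge] by blast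
    hence bu: "{b,u} \<in> E" by (rule edge_sym)
    have ua: "{u,a} \<in> E" using apex(1) a(1) False by blast
    define M' where "M' = M - {{b,a}} \<union> {{b,u}}"
    note M' = shift_matched_edge[OF M ba u(1) bu, folded M'_def]
    have "a \<notin> \<Union>M'" using M'(3) False by blast
    moreover have "{b,u} \<in> M'" unfolding M'_def by simp
    ultimately show ?thesis
      using triangle_apex_universal(1)[OF M'(1) _ a(1) _ ba_edge ua] a(2,3) by blast
  qed
  have "complete_graph V E" using complete_graph_if_adjacent adjacent by blast
  moreover have "card V = Suc (2 * card M)"
  proof -
    have "finite (\<Union>M)" using Union_matching_subset_V[OF m subset_refl] finite_V finite_subset by blast
    hence "card V = Suc (card (\<Union>M))" using apex(2) u(1) by simp
    thus ?thesis using card_Union_matching[OF m subset_refl] by simp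
  qed
  ultimately show ?thesis by simp
qed

lemma complete_odd_or_bipartite: "(complete_graph V E \<and> odd (card V)) \<or> bipartite V E"
proof -
  obtain M where M: "maximal_matching E M" using ex_maximal_matching[OF subset_refl] by blast
  consider (neither) x y where "{x,y} \<in> M" "x \<notin> free_nbrs M" "y \<notin> free_nbrs M"
    | (both) x y where "{x,y} \<in> M" "x \<in> free_nbrs M" "y \<in> free_nbrs M"
    | (one) "\<And>x y. {x,y} \<in> M \<Longrightarrow> x \<in> free_nbrs M \<or> y \<in> free_nbrs M"
        "\<And>x y. {x,y} \<in> M \<Longrightarrow> x \<notin> free_nbrs M \<or> y \<notin> free_nbrs M"
    by blast
  thus ?thesis
  proof cases
    case neither
    hence "V = {x,y}" using only_edge_if_no_free_nbrs[OF M] by blast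
    moreover have "x \<noteq> y" using matched_edge[OF maximal_matching_imp_matching[OF M] neither(1)] by simp
    ultimately show ?thesis using bipartite_if_two_vertices by blast
  next
    case both thus ?thesis using complete_odd_if_free_nbrs[OF M] by blast
  next
    case one thus ?thesis using bipartite_by_free_nbrs[OF M] vertex_stable by blast
  qed
qed

end

context connected_equimatchable_graph
begin

lemma stable_imp_complete_odd_or_bipartite:
  assumes "vertex_stable V E" and "\<forall>e\<in>E. equimatchable V (del_edge E e)"
  shows "(complete_graph V E \<and> odd (card V)) \<or> (bipartite V E \<and> edge_stable V E)"
proof -
  interpret vertex_edge_stable_graph V E using assms by unfold_locales
  show ?thesis using complete_odd_or_bipartite assms(2) equimatchable unfolding edge_stable_def by blast
qed

lemma stable_if_complete_odd_or_bipartite: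
  assumes "(complete_graph V E \<and> odd (card V)) \<or> (bipartite V E \<and> edge_stable V E)"
  shows "vertex_stable V E" and "\<forall>e\<in>E. equimatchable V (del_edge E e)"
proof -
  have "vertex_stable V E \<and> (\<forall>e\<in>E. equimatchable V (del_edge E e))"
  proof (cases "complete_graph V E \<and> odd (card V)")
    case True
    thus ?thesis unfolding vertex_stable_def using odd_complete_del_vertex odd_complete_del_edge by blast
  next
    case False
    hence B: "bipartite V E" and stable: "\<forall>e\<in>E. equimatchable V (del_edge E e)"
      using assms unfolding edge_stable_def by auto
    interpret edge_stable_graph V E using stable by unfold_locales
    show ?thesis unfolding vertex_stable_def using bipartite_del_vertex_equimatchable[OF B] stable by blast
  qed
  thus "vertex_stable V E" and "\<forall>e\<in>E. equimatchable V (del_edge E e)" by simp_all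
qed

end

theorem corollary8p1:
  fixes V :: "'a set" and E :: "'a set set"
  assumes "graph V E" and "connected_graph V E" and "equimatchable V E"
  shows "((\<forall>v\<in>V. equimatchable (del_vertex_V V v) (del_vertex_E E v)) \<and>
          (\<forall>e\<in>E. equimatchable V (del_edge E e)))
     \<longleftrightarrow> ((complete_graph V E \<and> odd (card V)) \<or>
          (bipartite V E \<and> edge_stable V E))"
proof -
  interpret connected_equimatchable_graph V E using assms by unfold_locales
  show ?thesis
    using stable_imp_complete_odd_or_bipartite stable_if_complete_odd_or_bipartite
    unfolding vertex_stable_def by blast
qed

end
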